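(* Let $g\ge1$ be an integer and let $a,b$ be integers with $0<a<b$. Define $\gamma_1=a$, $\gamma_2=b$, and for $r\ge3$ let $\gamma_r$ be the smallest integer greater than $\gamma_{r-1}$ such that $\{\gamma_1,\dots,\gamma_r\}$ is a $\mathcal D[g]$ set. Then there is an integer $n_0=n_0(a,b,g)$ such that $\gamma_n=2\gamma_{n-1}$ for all $n\ge n_0$.
   Context: For a positive integer $g$, a set $\mathcal S=\{a_1<a_2<\cdots\}\subset\mathbb N$ is a $\mathcal D[g]$ set if for every $m$ (for which $a_m$ exists) and every $t\in\mathbb Z$, $$\left|\left\{I\subseteq\{1,\dots,m\}:\ \sum_{i\in I}a_i=t\right\}\right|\le g.$$ *)

theory Defs
  imports Main
begin

text \<open>A set S of naturals, listed increasingly as a_1 < a_2 < ..., is a D[g] set if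
  for every m (with a_m existing) and every integer t, the number of subsets I of
  {1..m} with sum of a_i over I equal to t is at most g.  Since the a_i are distinct,
  subsets of indices {1..m} correspond bijectively to subsets of the prefix
  {x in S. x <= a_m}.\<close>
definition D_set :: "nat \<Rightarrow> nat set \<Rightarrow> bool" where
  "D_set g S \<longleftrightarrow>
     (\<forall>m\<in>S. \<forall>t::int. card {I. I \<subseteq> {x\<in>S. x \<le> m} \<and> (\<Sum>i\<in>I. int i) = t} \<le> g)"

text \<open>glist g a b k = [gamma_1, ..., gamma_(k+2)].\<close>
fun glist :: "nat \<Rightarrow> nat \<Rightarrow> nat \<Rightarrow> nat \<Rightarrow> nat list" where
  "glist g a b 0 = [a, b]"
| "glist g a b (Suc k) =
     (let L = glist g a b k
      in L @ [LEAST x. x > last L \<and> D_set g (insert x (set L))])"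

text \<open>gamma g a b r is gamma_r (1-based indexing, r >= 1).\<close>
definition gamma :: "nat \<Rightarrow> nat \<Rightarrow> nat \<Rightarrow> nat \<Rightarrow> nat" where
  "gamma g a b r = glist g a b (r - 2) ! (r - 1)"

end

theory Submission
  imports Defs Complex_Main
begin

(* Let s_k be the sum of the first k terms.  Since s_k + 1 exceeds every subset sum it can always
   be appended, so gamma_(k+1) <= s_k + 1; since at most g of the 2^k subsets share a sum,
   2^k <= g (s_k + 1).  By minimality, a term exceeding the sum of its two predecessors is at
   least twice the previous one: otherwise its difference with the previous term would have been
   admissible, and chosen, one step earlier.  So if gamma_(k+1) < 2 gamma_k, the deficit
   d_k = s_k + 1 - gamma_(k+1) is at least s_(k-2) + 1 >= 2^(k-2) / g.  The potential
   g (s_k + 1) / 2^(k-3) is nonnegative and decreases by g d_k / 2^(k-2), hence by at least 1 at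
   each such step, so there are only finitely many.  From then on d_k is a nonincreasing natural
   number, hence eventually constant, and d_(k+1) = d_k means gamma_(k+2) = 2 gamma_(k+1). *)

definition subset_sum_count :: "nat set \<Rightarrow> int \<Rightarrow> nat" where
  "subset_sum_count S t = card {I. I \<subseteq> S \<and> (\<Sum>i\<in>I. int i) = t}"

lemma finite_subsets_satisfying: "finite S \<Longrightarrow> finite {I. I \<subseteq> S \<and> P I}"
  by (rule finite_subset[of _ "Pow S"]) auto

lemma subsets_with_sum_insert:
  assumes "finite S" and "y \<notin> S"
  shows "{I. I \<subseteq> insert y S \<and> (\<Sum>i\<in>I. int i) = t}
    = {I. I \<subseteq> S \<and> (\<Sum>i\<in>I. int i) = t} \<union> insert y ` {I. I \<subseteq> S \<and> (\<Sum>i\<in>I. int i) = t - int y}"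
    (is "?L = ?A \<union> insert y ` ?B")
proof (intro equalityI subsetI)
  fix I assume I: "I \<in> ?L"
  show "I \<in> ?A \<union> insert y ` ?B"
  proof (cases "y \<in> I")
    case True
    have "finite I" using I assms(1) finite_subset by auto
    have "I - {y} \<subseteq> S" using I by auto
    moreover have "(\<Sum>i\<in>I - {y}. int i) = t - int y"
      using I True sum.remove[OF \<open>finite I\<close>, of y int] by auto
    ultimately have "I - {y} \<in> ?B" by simp
    moreover have "I = insert y (I - {y})" using True by auto
    ultimately show ?thesis by blast
  next
    case False
    then show ?thesis using I by auto
  qed
next
  fix I assume "I \<in> ?A \<union> insert y ` ?B"
  then show "I \<in> ?L"
  proof (elim UnE imageE)
    fix J assume J: "J \<in> ?B" and "I = insert y J"
    have "finite J" and "y \<notin> J" using J assms finite_subset by auto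
    then have "(\<Sum>i\<in>I. int i) = int y + (\<Sum>i\<in>J. int i)"
      using \<open>I = insert y J\<close> by simp
    then show ?thesis using J \<open>I = insert y J\<close> by auto
  qed auto
qed

lemma subset_sum_count_insert:
  assumes "finite S" and "y \<notin> S"
  shows "subset_sum_count (insert y S) t = subset_sum_count S t + subset_sum_count S (t - int y)"
proof -
  let ?A = "{I. I \<subseteq> S \<and> (\<Sum>i\<in>I. int i) = t}"
  let ?B = "{I. I \<subseteq> S \<and> (\<Sum>i\<in>I. int i) = t - int y}"
  have "?A \<inter> insert y ` ?B = {}" using assms(2) by auto
  moreover have "inj_on (insert y) ?B"
  proof (rule inj_onI)
    fix I J assume "I \<in> ?B" "J \<in> ?B" "insert y I = insert y J"
    then show "I = J" using assms(2) by (metis Diff_insert_absorb subset_iff mem_Collect_eq)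
  qed
  ultimately show ?thesis
    unfolding subset_sum_count_def subsets_with_sum_insert[OF assms]
    by (simp add: card_Un_disjoint finite_subsets_satisfying[OF assms(1)] card_image)
qed

lemma subset_sum_bounds:
  assumes "finite S" and "I \<subseteq> S"
  shows "(\<Sum>i\<in>I. int i) \<in> {0..int (\<Sum>S)}"
  using sum_mono2[OF assms, of int] by (simp add: sum_nonneg)

lemma subset_sum_count_eq_0:
  assumes "finite S" and "t \<notin> {0..int (\<Sum>S)}"
  shows "subset_sum_count S t = 0"
proof -
  have "{I. I \<subseteq> S \<and> (\<Sum>i\<in>I. int i) = t} = {}"
    using subset_sum_bounds[OF assms(1)] assms(2) by blast
  then show ?thesis unfolding subset_sum_count_def by (simp only: card.empty)
qed

lemma sum_subset_sum_count:
  assumes "finite S"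
  shows "(\<Sum>t\<in>{0..int (\<Sum>S)}. subset_sum_count S t) = 2 ^ card S"
proof -
  let ?P = "\<lambda>t. {I. I \<subseteq> S \<and> (\<Sum>i\<in>I. int i) = t}"
  have "Pow S = (\<Union>t\<in>{0..int (\<Sum>S)}. ?P t)"
    using subset_sum_bounds[OF assms] by blast
  then have "2 ^ card S = card (\<Union>t\<in>{0..int (\<Sum>S)}. ?P t)"
    using card_Pow[OF assms] by simp
  also have "\<dots> = (\<Sum>t\<in>{0..int (\<Sum>S)}. card (?P t))"
    by (rule card_UN_disjoint) (auto intro: finite_subsets_satisfying assms)
  finally show ?thesis unfolding subset_sum_count_def by simp
qed

lemma two_power_card_le_if_subset_sum_count_le:
  assumes "finite S" and "\<And>t. subset_sum_count S t \<le> g"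
  shows "2 ^ card S \<le> g * (\<Sum>S + 1)"
proof -
  have "2 ^ card S \<le> (\<Sum>t\<in>{0..int (\<Sum>S)}. g)"
    unfolding sum_subset_sum_count[OF assms(1), symmetric] by (intro sum_mono assms(2))
  also have "\<dots> = g * (\<Sum>S + 1)" by (simp del: of_nat_sum add: nat_add_distrib)
  finally show ?thesis .
qed

lemma D_set_iff_subset_sum_count_le:
  assumes "finite S" and "S \<noteq> {}"
  shows "D_set g S \<longleftrightarrow> (\<forall>t. subset_sum_count S t \<le> g)"
proof
  assume D: "D_set g S"
  show "\<forall>t. subset_sum_count S t \<le> g"
  proof
    fix t
    have "{x\<in>S. x \<le> Max S} = S" using assms(1) by auto
    moreover have "card {I. I \<subseteq> {x\<in>S. x \<le> Max S} \<and> (\<Sum>i\<in>I. int i) = t} \<le> g"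
      using D Max_in[OF assms] unfolding D_set_def by blast
    ultimately show "subset_sum_count S t \<le> g" unfolding subset_sum_count_def by simp
  qed
next
  assume le_g: "\<forall>t. subset_sum_count S t \<le> g"
  show "D_set g S" unfolding D_set_def
  proof (intro ballI allI)
    fix m t
    have "subset_sum_count {x\<in>S. x \<le> m} t \<le> subset_sum_count S t"
      unfolding subset_sum_count_def
      by (rule card_mono) (auto intro: finite_subsets_satisfying assms(1))
    then show "card {I. I \<subseteq> {x\<in>S. x \<le> m} \<and> (\<Sum>i\<in>I. int i) = t} \<le> g"
      using le_g unfolding subset_sum_count_def by (meson order_trans)
  qed
qed

definition admissible :: "nat \<Rightarrow> nat set \<Rightarrow> nat \<Rightarrow> bool" where
  "admissible g S y \<longleftrightarrow> (\<forall>t. subset_sum_count S t + subset_sum_count S (t - int y) \<le> g)"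

lemma D_set_insert_iff_admissible:
  assumes "finite S" and "y \<notin> S"
  shows "D_set g (insert y S) \<longleftrightarrow> admissible g S y"
  using D_set_iff_subset_sum_count_le[of "insert y S"] assms
  by (simp add: admissible_def subset_sum_count_insert)

lemma admissible_diff:
  assumes "finite S" and "x \<notin> S" and "x \<le> y" and "admissible g (insert x S) y"
  shows "admissible g S (y - x)"
  unfolding admissible_def
proof
  fix t
  have "subset_sum_count (insert x S) (t + int x) + subset_sum_count (insert x S) (t - int (y - x)) \<le> g"
    using assms(3,4) unfolding admissible_def by (metis add_diff_eq diff_diff_eq2 of_nat_diff)
  then show "subset_sum_count S t + subset_sum_count S (t - int (y - x)) \<le> g"
    unfolding subset_sum_count_insert[OF assms(1,2)] by simp
qed

lemma admissible_if_sum_less: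
  assumes "finite S" and "\<And>t. subset_sum_count S t \<le> g" and "\<Sum>S < y"
  shows "admissible g S y"
  unfolding admissible_def
proof
  fix t
  have y: "int (\<Sum>S) < int y" using assms(3) by (simp only: of_nat_less_iff)
  show "subset_sum_count S t + subset_sum_count S (t - int y) \<le> g"
  proof (cases "t \<le> int (\<Sum>S)")
    case True
    then have "subset_sum_count S (t - int y) = 0"
      using y by (intro subset_sum_count_eq_0[OF assms(1)]) simp
    then show ?thesis using assms(2)[of t] by simp
  next
    case False
    then have "subset_sum_count S t = 0"
      by (intro subset_sum_count_eq_0[OF assms(1)]) simp
    then show ?thesis using assms(2)[of "t - int y"] by simp
  qed
qed

lemma D_set_pair:
  assumes "1 \<le> g" and "0 < a" and "a < b"
  shows "D_set g {a, b}"
proof -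
  have "subset_sum_count {a, b} t \<le> 1" for t
  proof -
    have "{I. I \<subseteq> {} \<and> (\<Sum>i\<in>I. int i) = s} = (if s = 0 then {{}} else {})" for s
      by auto
    then have "subset_sum_count {} s = (if s = 0 then 1 else 0)" for s
      unfolding subset_sum_count_def by simp
    then show ?thesis
      using assms(2,3) by (simp add: subset_sum_count_insert)
  qed
  then show ?thesis
    using assms(1) by (subst D_set_iff_subset_sum_count_le) (auto intro: order_trans)
qed

lemma D_set_insert_Suc_sum:
  assumes "finite S" and "S \<noteq> {}" and "D_set g S"
  shows "D_set g (insert (\<Sum>S + 1) S)"
proof -
  have "\<Sum>S + 1 \<notin> S" using member_le_sum[of _ S id] assms(1) by fastforce
  moreover have "admissible g S (\<Sum>S + 1)"
    using assms by (intro admissible_if_sum_less) (auto simp: D_set_iff_subset_sum_count_le)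
  ultimately show ?thesis using D_set_insert_iff_admissible[OF assms(1)] by blast
qed

lemma nonincreasing_nat_seq_eventually_const:
  fixes f :: "nat \<Rightarrow> nat"
  assumes "\<And>n. N \<le> n \<Longrightarrow> f (Suc n) \<le> f n"
  shows "\<exists>K. \<forall>n\<ge>K. f n = f K"
proof -
  obtain K where "N \<le> K" and least: "\<And>n. N \<le> n \<Longrightarrow> f K \<le> f n"
    using ex_has_least_nat[of "\<lambda>n. N \<le> n" N f] by auto
  have "f n \<le> f K" if "K \<le> n" for n
    by (rule lift_Suc_antimono_le_ivl[of "{N..}"]) (use assms \<open>N \<le> K\<close> that in auto)
  then have "\<forall>n\<ge>K. f n = f K"
    using least \<open>N \<le> K\<close> by (meson order_antisym order_trans)
  then show ?thesis ..
qed

lemma eventually_no_unit_drop: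
  fixes f :: "nat \<Rightarrow> real"
  assumes "\<And>n. 0 \<le> f n" and "\<And>n. f (Suc n) \<le> f n"
  shows "\<exists>K. \<forall>n\<ge>K. f n - 1 < f (Suc n)"
proof -
  obtain K where K: "\<forall>n\<ge>K. nat \<lfloor>f n\<rfloor> = nat \<lfloor>f K\<rfloor>"
    using nonincreasing_nat_seq_eventually_const[of 0 "\<lambda>n. nat \<lfloor>f n\<rfloor>"] assms(2)
    by (meson floor_mono nat_mono)
  have "f n - 1 < f (Suc n)" if "K \<le> n" for n
  proof (rule ccontr)
    assume "\<not> f n - 1 < f (Suc n)"
    then have "\<lfloor>f (Suc n)\<rfloor> \<le> \<lfloor>f n\<rfloor> - 1" using floor_mono[of "f (Suc n)" "f n - 1"] by simp
    moreover have "0 \<le> \<lfloor>f (Suc n)\<rfloor>" using assms(1)[of "Suc n"] by simp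
    moreover have "nat \<lfloor>f (Suc n)\<rfloor> = nat \<lfloor>f n\<rfloor>"
      using K[rule_format, of n] K[rule_format, of "Suc n"] that by simp
    ultimately show False by linarith
  qed
  then show ?thesis by blast
qed

locale greedy_D_sequence =
  fixes g a b :: nat
  assumes g_pos: "1 \<le> g" and a_pos: "0 < a" and a_less_b: "a < b"
begin

text \<open>\<open>terms k\<close> is {gamma_1, ..., gamma_(k+2)} and \<open>newest k\<close> is gamma_(k+2).\<close>

definition terms :: "nat \<Rightarrow> nat set" where
  "terms k = set (glist g a b k)"

definition newest :: "nat \<Rightarrow> nat" where
  "newest k = last (glist g a b k)"

abbreviation terms_sum :: "nat \<Rightarrow> nat" where
  "terms_sum k \<equiv> \<Sum>(terms k)"

lemma terms_0: "terms 0 = {a, b}"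
  by (simp add: terms_def)

lemma newest_0: "newest 0 = b"
  by (simp add: newest_def)

lemma terms_Suc: "terms (Suc k) = insert (newest (Suc k)) (terms k)"
  by (simp add: terms_def newest_def Let_def)

lemma newest_Suc: "newest (Suc k) = (LEAST y. newest k < y \<and> D_set g (insert y (terms k)))"
  by (simp add: terms_def newest_def Let_def)

lemma finite_terms [simp]: "finite (terms k)"
  by (simp add: terms_def)

lemma greedy_step:
  assumes "D_set g (terms k)" and "newest k \<in> terms k"
  shows "newest k < newest (Suc k)" and "D_set g (insert (newest (Suc k)) (terms k))"
    and "newest (Suc k) \<le> terms_sum k + 1"
proof -
  let ?P = "\<lambda>y. newest k < y \<and> D_set g (insert y (terms k))"
  have "newest k < terms_sum k + 1"
    using assms(2) member_le_sum[of "newest k" "terms k" id] by simp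
  moreover have "D_set g (insert (terms_sum k + 1) (terms k))"
    using assms by (intro D_set_insert_Suc_sum) auto
  ultimately have witness: "?P (terms_sum k + 1)" by blast
  then have "?P (newest (Suc k))" unfolding newest_Suc by (rule LeastI)
  then show "newest k < newest (Suc k)" and "D_set g (insert (newest (Suc k)) (terms k))"
    by blast+
  show "newest (Suc k) \<le> terms_sum k + 1" unfolding newest_Suc using witness by (rule Least_le)
qed

lemma terms_invariant:
  "D_set g (terms k) \<and> newest k \<in> terms k \<and> (\<forall>y\<in>terms k. y \<le> newest k)"
proof (induction k)
  case 0
  then show ?case using D_set_pair[OF g_pos a_pos a_less_b] a_less_b by (simp add: terms_0 newest_0)
next
  case (Suc k)
  then show ?case using greedy_step[of k] by (auto simp: terms_Suc)
qed

lemma newest_less_Suc: "newest k < newest (Suc k)"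
  and newest_Suc_le_terms_sum: "newest (Suc k) \<le> terms_sum k + 1"
  using greedy_step terms_invariant by blast+

lemma newest_Suc_notin: "newest (Suc k) \<notin> terms k"
  using terms_invariant[of k] newest_less_Suc[of k] by fastforce

lemma admissible_newest_Suc: "admissible g (terms k) (newest (Suc k))"
  using greedy_step[of k] terms_invariant[of k] newest_Suc_notin[of k]
  by (simp add: D_set_insert_iff_admissible)

lemma not_admissible_between:
  assumes "newest k < y" and "y < newest (Suc k)"
  shows "\<not> admissible g (terms k) y"
proof
  assume "admissible g (terms k) y"
  moreover have "y \<notin> terms k" using terms_invariant[of k] assms(1) by fastforce
  ultimately have "D_set g (insert y (terms k))" by (simp add: D_set_insert_iff_admissible)
  then have "newest (Suc k) \<le> y" unfolding newest_Suc using assms(1) by (auto intro: Least_le)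
  then show False using assms(2) by simp
qed

lemma card_terms: "card (terms k) = k + 2"
  by (induction k) (use a_less_b newest_Suc_notin in \<open>simp_all add: terms_0 terms_Suc\<close>)

lemma terms_sum_Suc: "terms_sum (Suc k) = terms_sum k + newest (Suc k)"
  by (simp add: terms_Suc newest_Suc_notin)

lemma two_power_le_terms_sum: "2 ^ (k + 2) \<le> g * (terms_sum k + 1)"
proof -
  have "D_set g (terms k)" and "terms k \<noteq> {}" using terms_invariant[of k] by auto
  then show ?thesis
    using two_power_card_le_if_subset_sum_count_le[of "terms k" g]
    by (simp add: card_terms D_set_iff_subset_sum_count_le)
qed

lemma double_newest_if_gap:
  assumes "newest j + newest (Suc j) < newest (Suc (Suc j))"
  shows "2 * newest (Suc j) \<le> newest (Suc (Suc j))"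
proof (rule ccontr)
  assume "\<not> 2 * newest (Suc j) \<le> newest (Suc (Suc j))"
  moreover have "admissible g (terms j) (newest (Suc (Suc j)) - newest (Suc j))"
    using admissible_newest_Suc[of "Suc j"] newest_Suc_notin[of j] newest_less_Suc[of "Suc j"]
    by (intro admissible_diff) (simp_all add: terms_Suc)
  ultimately show False
    using not_admissible_between[of j "newest (Suc (Suc j)) - newest (Suc j)"] assms by simp
qed

definition deficit :: "nat \<Rightarrow> nat" where
  "deficit k = terms_sum k + 1 - newest (Suc k)"

lemma deficit_add_newest: "deficit k + newest (Suc k) = terms_sum k + 1"
  using newest_Suc_le_terms_sum[of k] by (simp add: deficit_def)

lemma deficit_Suc_add: "deficit (Suc k) + newest (Suc (Suc k)) = deficit k + 2 * newest (Suc k)"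
  using deficit_add_newest[of k] deficit_add_newest[of "Suc k"] terms_sum_Suc[of k] by simp

lemma two_power_le_deficit_if_short_step:
  assumes "2 \<le> k" and "newest (Suc k) < 2 * newest k"
  shows "2 ^ k \<le> g * deficit k"
proof -
  define i where "i = k - 2"
  have k: "k = Suc (Suc i)" using assms(1) by (simp add: i_def)
  have "newest (Suc k) \<le> newest (Suc i) + newest k"
    using double_newest_if_gap[of "Suc i"] assms(2) unfolding k by linarith
  moreover have "terms_sum k = terms_sum i + newest (Suc i) + newest k"
    unfolding k by (simp add: terms_sum_Suc)
  ultimately have "terms_sum i + 1 \<le> deficit k"
    using deficit_add_newest[of k] by linarith
  then have "g * (terms_sum i + 1) \<le> g * deficit k" by (rule mult_le_mono2)
  with two_power_le_terms_sum[of i] show ?thesis unfolding k by simp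
qed

definition potential :: "nat \<Rightarrow> real" where
  "potential k = 2 * real g * (real (terms_sum k) + 1) / 2 ^ k"

lemma potential_Suc: "potential (Suc k) = potential k - real g * real (deficit k) / 2 ^ k"
proof -
  have "terms_sum (Suc k) + 1 + deficit k = 2 * (terms_sum k + 1)"
    using deficit_add_newest[of k] terms_sum_Suc[of k] by simp
  then have "real (terms_sum (Suc k) + 1 + deficit k) = real (2 * (terms_sum k + 1))"
    by (rule arg_cong)
  then have "real (terms_sum (Suc k)) + 1 + real (deficit k) = 2 * (real (terms_sum k) + 1)"
    by (simp only: of_nat_add of_nat_mult of_nat_1 of_nat_numeral)
  then have sum_Suc: "real (terms_sum (Suc k)) = 2 * (real (terms_sum k) + 1) - real (deficit k) - 1"
    unfolding eq_diff_eq .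
  show ?thesis unfolding potential_def sum_Suc by (simp add: field_simps)
qed

lemma eventually_no_short_step: "\<exists>K. \<forall>k\<ge>K. 2 * newest k \<le> newest (Suc k)"
proof -
  have "\<exists>K. \<forall>k\<ge>K. potential k - 1 < potential (Suc k)"
  proof (rule eventually_no_unit_drop)
    show "0 \<le> potential k" for k by (simp add: potential_def sum_nonneg)
    show "potential (Suc k) \<le> potential k" for k unfolding potential_Suc by simp
  qed
  then obtain K where K: "\<forall>k\<ge>K. potential k - 1 < potential (Suc k)" ..
  have "2 * newest k \<le> newest (Suc k)" if "K \<le> k" and "2 \<le> k" for k
  proof (rule ccontr)
    assume "\<not> 2 * newest k \<le> newest (Suc k)"
    then have "2 ^ k \<le> g * deficit k"
      using two_power_le_deficit_if_short_step[OF \<open>2 \<le> k\<close>] by simp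
    then have "real (2 ^ k) \<le> real (g * deficit k)" by (simp only: of_nat_le_iff)
    then have "1 \<le> real g * real (deficit k) / 2 ^ k" by (simp add: le_divide_eq)
    then have "potential (Suc k) \<le> potential k - 1" unfolding potential_Suc by linarith
    moreover have "potential k - 1 < potential (Suc k)" using K \<open>K \<le> k\<close> by blast
    ultimately show False by linarith
  qed
  then show ?thesis by (metis max.bounded_iff)
qed

lemma eventually_doubling: "\<exists>K. \<forall>k\<ge>K. newest (Suc k) = 2 * newest k"
proof -
  obtain K where K: "\<forall>k\<ge>K. 2 * newest k \<le> newest (Suc k)"
    using eventually_no_short_step ..
  have "deficit (Suc k) \<le> deficit k" if "K \<le> k" for k
  proof -
    have "2 * newest (Suc k) \<le> newest (Suc (Suc k))" using K that by simp
    then show ?thesis using deficit_Suc_add[of k] by linarith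
  qed
  from nonincreasing_nat_seq_eventually_const[of K deficit, OF this]
  obtain K' where K': "\<forall>k\<ge>K'. deficit k = deficit K'" ..
  have doubling: "newest (Suc (Suc k)) = 2 * newest (Suc k)" if "K' \<le> k" for k
    using deficit_Suc_add[of k] K'[rule_format, OF that] K'[rule_format, OF le_SucI[OF that]]
    by linarith
  show ?thesis
  proof (intro exI allI impI)
    fix k assume "Suc K' \<le> k"
    then obtain j where "k = Suc j" and "K' \<le> j" by (cases k) auto
    then show "newest (Suc k) = 2 * newest k" using doubling by simp
  qed
qed

lemma gamma_eq_newest:
  assumes "2 \<le> n"
  shows "gamma g a b n = newest (n - 2)"
proof -
  have "length (glist g a b k) = k + 2" for k
    by (induction k) (simp_all add: Let_def)
  then have "length (glist g a b (n - 2)) = n" using assms by simp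
  moreover from this have "glist g a b (n - 2) \<noteq> []" using assms by auto
  ultimately show ?thesis by (simp add: gamma_def newest_def last_conv_nth)
qed

end

theorem theorem5:
  fixes g a b :: nat
  assumes "g \<ge> 1" and "0 < a" and "a < b"
  shows "\<exists>n0::nat. \<forall>n\<ge>n0. gamma g a b n = 2 * gamma g a b (n - 1)"
proof -
  interpret greedy_D_sequence g a b
    using assms by unfold_locales
  obtain K where K: "\<forall>k\<ge>K. newest (Suc k) = 2 * newest k"
    using eventually_doubling ..
  have "gamma g a b n = 2 * gamma g a b (n - 1)" if "K + 3 \<le> n" for n
  proof -
    have "n - 2 = Suc (n - 3)" and "n - 1 - 2 = n - 3" using that by auto
    then have "gamma g a b n = newest (Suc (n - 3))" and "gamma g a b (n - 1) = newest (n - 3)"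
      using that gamma_eq_newest[of n] gamma_eq_newest[of "n - 1"] by auto
    moreover have "newest (Suc (n - 3)) = 2 * newest (n - 3)" using K that by simp
    ultimately show ?thesis by simp
  qed
  then show ?thesis by blast
qed

end
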